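(* Let $\widetilde Q_m(x)=x^mQ_m(1/x)$. Then for all $m\ge 0$, $$\widetilde Q_{m+1}(x)=(2mx+4m+2x+3)\widetilde Q_m(x)+2x(1+x)\widetilde Q_m'(x),\qquad \widetilde Q_0(x)=1.$$
   Context: $P_m(x)=\sum_{i=0}^m d_i(m)x^i$ with $d_i(m)=2^{-2m}\sum_{k=i}^m 2^k\binom{2m-2k}{m-k}\binom{m+k}{k}\binom{k}{i}$ (the Boros–Moll polynomials); $Q_m(x)=2^m m!\,x^mP_m(1/x)$, so $\widetilde Q_m(x)=2^m m!\,P_m(x)$. *)

theory Defs
  imports Complex_Main "HOL-Computational_Algebra.Polynomial"
begin

definition bm_d :: "nat \<Rightarrow> nat \<Rightarrow> real" where
  "bm_d m i = (1 / 2 ^ (2 * m)) *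
     (\<Sum>k = i..m. 2 ^ k * real ((2 * m - 2 * k) choose (m - k)) *
        real ((m + k) choose k) * real (k choose i))"

definition bm_P :: "nat \<Rightarrow> real poly" where
  "bm_P m = (\<Sum>i = 0..m. monom (bm_d m i) i)"

text \<open>Q_m(x) = 2^m m! x^m P_m(1/x), as a polynomial (coefficient of x^i in P_m goes to x^(m-i)).\<close>
definition bm_Q :: "nat \<Rightarrow> real poly" where
  "bm_Q m = (\<Sum>i = 0..m. monom (2 ^ m * fact m * coeff (bm_P m) i) (m - i))"

definition bm_Qt :: "nat \<Rightarrow> real poly" where
  "bm_Qt m = (\<Sum>j = 0..m. monom (coeff (bm_Q m) j) (m - j))"

end

theory Submission
  imports Defs
begin

text \<open>
  \<open>Q\<^sub>m\<close> is the degree-\<open>m\<close> reversal of \<open>2\<^sup>m m! P\<^sub>m\<close>, so reversing it again gives back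
  \<open>2\<^sup>m m! P\<^sub>m\<close> and the claim becomes a first-order recurrence for \<open>P\<^sub>m\<close>.
  Expanding \<open>P\<^sub>m\<close> in powers of \<open>y = 1 + x\<close>, with coefficients
  \<open>A\<^sub>k(m) = 2\<^sup>k (2m-2k choose m-k) (m+k choose k) / 4\<^sup>m\<close>, the recurrence reads
  \<open>2(m+1) P\<^sub>m\<^sub>+\<^sub>1 = (2(m+1) y + 2m + 1) P\<^sub>m + 2 (y - 1) y P\<^sub>m'\<close>; comparing coefficients of
  \<open>y\<^sup>k\<close> reduces it to two elementary binomial identities.
\<close>

lemma coeff_sum_monom_diff:
  fixes f :: "nat \<Rightarrow> 'a::comm_monoid_add"
  shows "coeff (\<Sum>i = 0..m. monom (f i) (m - i)) n = (if n \<le> m then f (m - n) else 0)"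
proof -
  have "coeff (\<Sum>i = 0..m. monom (f i) (m - i)) n = (\<Sum>i = 0..m. if i = m - n \<and> n \<le> m then f i else 0)"
    unfolding coeff_sum coeff_monom by (rule sum.cong) auto
  then show ?thesis by (simp add: sum.delta)
qed

lemma coeff_bm_P: "coeff (bm_P m) n = bm_d m n"
  by (simp add: bm_P_def coeff_sum coeff_monom sum.delta bm_d_def)

lemma bm_Qt_eq_smult_bm_P: "bm_Qt m = smult (2 ^ m * fact m) (bm_P m)"
  by (rule poly_eqI) (simp add: bm_Qt_def bm_Q_def coeff_sum_monom_diff coeff_bm_P bm_d_def)

definition bm_A :: "nat \<Rightarrow> nat \<Rightarrow> real" where
  "bm_A m k = (if k \<le> m then
     2 ^ k * real (2 * (m - k) choose (m - k)) * real (m + k choose k) / 2 ^ (2 * m) else 0)"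

definition bm_S :: "nat \<Rightarrow> real poly" where
  "bm_S m = (\<Sum>k\<le>m. monom (bm_A m k) k)"

lemma coeff_bm_S: "coeff (bm_S m) n = bm_A m n"
  by (simp add: bm_S_def coeff_sum coeff_monom bm_A_def)

lemma coeff_one_plus_X_power: "coeff ([:1, 1:] ^ k) n = (of_nat (k choose n) :: 'a::comm_semiring_1)"
proof (cases "n \<le> k")
  case True
  then show ?thesis by (simp add: coeff_linear_poly_power)
next
  case False
  then have "degree ([:1::'a, 1:] ^ k) < n"
    using degree_power_le[of "[:1::'a, 1:]" k] by simp
  with False show ?thesis by (simp add: coeff_eq_0 binomial_eq_0)
qed

lemma pcompose_monom: "pcompose (monom a k) q = smult a (q ^ k)"
  by (induction k) (simp_all add: monom_Suc pcompose_pCons monom_0)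

lemma bm_P_eq_pcompose: "bm_P m = pcompose (bm_S m) [:1, 1:]"
proof (rule poly_eqI)
  fix n
  have "coeff (pcompose (bm_S m) [:1, 1:]) n = (\<Sum>k\<le>m. bm_A m k * real (k choose n))"
    by (simp add: bm_S_def pcompose_sum pcompose_monom coeff_sum coeff_one_plus_X_power)
  also have "\<dots> = (\<Sum>k = n..m. bm_A m k * real (k choose n))"
    by (rule sum.mono_neutral_right) auto
  also have "\<dots> = bm_d m n"
    unfolding bm_d_def sum_distrib_left by (rule sum.cong) (auto simp: bm_A_def diff_mult_distrib2)
  finally show "coeff (bm_P m) n = coeff (pcompose (bm_S m) [:1, 1:]) n"
    by (simp add: coeff_bm_P)
qed

lemma central_binomial_Suc:
  "Suc n * (2 * Suc n choose Suc n) = 2 * (2 * n + 1) * (2 * n choose n)"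
proof -
  have "Suc n * (2 * Suc n choose Suc n) = (2 * n + 2) * (2 * n + 1 choose n)"
    using Suc_times_binomial_eq[of "2 * n + 1" n] by (simp add: mult.commute)
  also have "\<dots> = 2 * ((2 * n + 1 - n) * (2 * n + 1 choose n))"
    by simp
  also have "\<dots> = 2 * (2 * n + 1) * (2 * n choose n)"
    by (simp only: binomial_absorb_comp) simp
  finally show ?thesis .
qed

lemma bm_binomial_identity:
  assumes "k \<le> m"
  shows "(m + 1) * (m + k + 2 choose Suc k)
    = 2 * (m + k + 1) * (m + k choose k) + (m - k) * (m + k + 1 choose Suc k)"
proof -
  have "(m + 1) * (m + k + 2 choose Suc k) = (m + k + 2) * (m + k + 1 choose Suc k)"
    using binomial_absorb_comp[of "m + k + 2" "Suc k"] by simp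
  also have "\<dots> = 2 * ((m + k + 1 choose Suc k) * Suc k) + (m - k) * (m + k + 1 choose Suc k)"
  proof -
    have "m + k + 2 = 2 * Suc k + (m - k)"
      using assms by simp
    then show ?thesis
      by (simp only:) (simp add: algebra_simps del: binomial_Suc_Suc)
  qed
  also have "(m + k + 1 choose Suc k) * Suc k = (m + k + 1) * (m + k choose k)"
    using Suc_times_binomial_eq[of "m + k" k] by simp
  finally show ?thesis by simp
qed

lemma bm_A_rec_0: "2 * real (Suc m) * bm_A (Suc m) 0 = (2 * real m + 1) * bm_A m 0"
proof -
  have central: "real (Suc m) * real (2 * Suc m choose Suc m) = 2 * (2 * real m + 1) * real (2 * m choose m)"
    using arg_cong[OF central_binomial_Suc[of m], of real] by (simp add: algebra_simps del: binomial_Suc_Suc)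
  have "2 * real (Suc m) * bm_A (Suc m) 0
      = real (Suc m) * real (2 * Suc m choose Suc m) / (2 * 2 ^ (2 * m))"
    by (simp add: bm_A_def power_add field_simps del: binomial_Suc_Suc)
  also have "\<dots> = (2 * real m + 1) * bm_A m 0"
    unfolding central by (simp add: bm_A_def field_simps)
  finally show ?thesis .
qed

lemma bm_A_rec_Suc:
  assumes "k \<le> m"
  shows "2 * real (Suc m) * bm_A (Suc m) (Suc k)
    = (2 * real m + 2 * real k + 2) * bm_A m k + (2 * real m - 1 - 2 * real k) * bm_A m (Suc k)"
proof -
  define c :: real where "c = 2 ^ k * real (2 * (m - k) choose (m - k)) / 2 ^ (2 * m)"
  have A_Suc_Suc: "bm_A (Suc m) (Suc k) = c * real (m + k + 2 choose Suc k) / 2"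
    using assms by (simp add: bm_A_def c_def algebra_simps del: binomial_Suc_Suc)
  have A_k: "bm_A m k = c * real (m + k choose k)"
    using assms by (simp add: bm_A_def c_def del: binomial_Suc_Suc)
  have A_Suc: "(2 * real m - 1 - 2 * real k) * bm_A m (Suc k)
      = c * real (m - k) * real (m + k + 1 choose Suc k)"
  proof (cases "k = m")
    case True
    then show ?thesis by (simp add: bm_A_def)
  next
    case False
    with assms obtain n where n: "m - k = Suc n"
      by (metis Suc_diff_Suc le_neq_implies_less)
    define d :: real where "d = 2 ^ k / 2 ^ (2 * m)"
    define U where "U = real (2 * n choose n)"
    define V where "V = real (2 * Suc n choose Suc n)"
    define B where "B = real (m + k + 1 choose Suc k)"
    have central: "real (Suc n) * V = 2 * (2 * real n + 1) * U"
      using arg_cong[OF central_binomial_Suc[of n], of real] unfolding U_def V_def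
      by (simp add: algebra_simps del: binomial_Suc_Suc)
    have A: "bm_A m (Suc k) = d * (2 * U) * B"
    proof -
      have "m - Suc k = n" "Suc k \<le> m" "m + Suc k = m + k + 1"
        using n by simp_all
      then show ?thesis
        by (simp only: bm_A_def d_def U_def B_def) simp
    qed
    have c: "c = d * V"
      using n by (simp add: c_def d_def V_def)
    have coef: "2 * real m - 1 - 2 * real k = 2 * real n + 1"
      using n assms by (simp add: of_nat_diff)
    have "(2 * real m - 1 - 2 * real k) * bm_A m (Suc k) = d * (2 * (2 * real n + 1) * U) * B"
      unfolding A coef by (simp only: ac_simps)
    also have "\<dots> = c * real (m - k) * real (m + k + 1 choose Suc k)"
      unfolding central[symmetric] c n B_def by (simp only: ac_simps)
    finally show ?thesis .
  qed
  have binomial: "real (m + 1) * real (m + k + 2 choose Suc k)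
    = 2 * real (m + k + 1) * real (m + k choose k) + real (m - k) * real (m + k + 1 choose Suc k)"
    using arg_cong[OF bm_binomial_identity[OF assms], of real]
    by (simp only: of_nat_add of_nat_mult of_nat_numeral)
  have "2 * real (Suc m) * bm_A (Suc m) (Suc k) = c * (real (m + 1) * real (m + k + 2 choose Suc k))"
    unfolding A_Suc_Suc by (simp add: algebra_simps del: binomial_Suc_Suc)
  also have "\<dots> = (2 * real m + 2 * real k + 2) * (c * real (m + k choose k))
      + c * real (m - k) * real (m + k + 1 choose Suc k)"
    unfolding binomial by (simp add: algebra_simps)
  finally show ?thesis
    unfolding A_k A_Suc .
qed

lemma coeff_pCons_0_pderiv: "coeff (pCons 0 (pderiv p)) n = of_nat n * coeff p n"
  by (cases n) (simp_all add: coeff_pderiv)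

lemma bm_S_rec:
  "smult (2 * real (Suc m)) (bm_S (Suc m))
    = [:2 * real m + 1, 2 * real (Suc m):] * bm_S m + smult 2 ([:-1, 1:] * pCons 0 (pderiv (bm_S m)))"
proof (rule poly_eqI)
  fix n
  show "coeff (smult (2 * real (Suc m)) (bm_S (Suc m))) n
    = coeff ([:2 * real m + 1, 2 * real (Suc m):] * bm_S m + smult 2 ([:-1, 1:] * pCons 0 (pderiv (bm_S m)))) n"
  proof (cases n)
    case 0
    then show ?thesis
      using bm_A_rec_0[of m] by (simp add: coeff_bm_S coeff_pCons_0_pderiv)
  next
    case (Suc k)
    have "2 * real (Suc m) * bm_A (Suc m) (Suc k)
        = (2 * real m + 2 * real k + 2) * bm_A m k + (2 * real m - 1 - 2 * real k) * bm_A m (Suc k)"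
    proof (cases "k \<le> m")
      case True
      then show ?thesis by (rule bm_A_rec_Suc)
    next
      case False
      then show ?thesis by (simp add: bm_A_def)
    qed
    then show ?thesis
      using Suc by (simp add: coeff_bm_S coeff_pCons_0_pderiv coeff_pderiv algebra_simps)
  qed
qed

lemma bm_P_rec:
  "smult (2 * real (Suc m)) (bm_P (Suc m))
    = [:4 * real m + 3, 2 * real (Suc m):] * bm_P m + [:0, 2, 2:] * pderiv (bm_P m)"
proof -
  have shift_linear: "pcompose [:2 * real m + 1, 2 * real (Suc m):] [:1, 1:] = [:4 * real m + 3, 2 * real (Suc m):]"
    by (simp add: pcompose_pCons)
  have shift_X_minus_1: "pcompose [:-1, 1:] [:1, 1:] = [:0, 1::real:]"
    by (simp add: pcompose_pCons)
  have shift_X_deriv: "pcompose (pCons 0 (pderiv (bm_S m))) [:1, 1:] = [:1, 1:] * pderiv (bm_P m)"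
    by (simp add: bm_P_eq_pcompose pcompose_pCons pderiv_pcompose pderiv_pCons)
  have quadratic: "[:0, 2, 2:] = smult 2 ([:0, 1:] * [:1, 1::real:])"
    by simp
  have "smult (2 * real (Suc m)) (bm_P (Suc m))
    = pcompose ([:2 * real m + 1, 2 * real (Suc m):] * bm_S m
        + smult 2 ([:-1, 1:] * pCons 0 (pderiv (bm_S m)))) [:1, 1:]"
    unfolding bm_P_eq_pcompose pcompose_smult[symmetric] bm_S_rec ..
  also have "\<dots> = [:4 * real m + 3, 2 * real (Suc m):] * bm_P m
      + smult 2 ([:0, 1:] * ([:1, 1:] * pderiv (bm_P m)))"
    unfolding pcompose_add pcompose_mult pcompose_smult shift_linear shift_X_minus_1 shift_X_deriv
      bm_P_eq_pcompose ..
  also have "\<dots> = [:4 * real m + 3, 2 * real (Suc m):] * bm_P m + [:0, 2, 2:] * pderiv (bm_P m)"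
    unfolding quadratic by (simp only: mult_smult_left mult.assoc)
  finally show ?thesis .
qed

lemma bm_Qt_rec:
  "bm_Qt (Suc m) = [:4 * real m + 3, 2 * real (Suc m):] * bm_Qt m + [:0, 2, 2:] * pderiv (bm_Qt m)"
proof -
  have "bm_Qt (Suc m) = smult (2 ^ m * fact m) (smult (2 * real (Suc m)) (bm_P (Suc m)))"
    by (simp add: bm_Qt_eq_smult_bm_P algebra_simps)
  also have "\<dots> = [:4 * real m + 3, 2 * real (Suc m):] * bm_Qt m + [:0, 2, 2:] * pderiv (bm_Qt m)"
    unfolding bm_P_rec by (simp add: bm_Qt_eq_smult_bm_P pderiv_smult smult_add_right)
  finally show ?thesis .
qed

theorem mainTheorem7:
  fixes m :: nat
  shows "(\<forall>x::real. poly (bm_Qt (m + 1)) x =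
            (2 * real m * x + 4 * real m + 2 * x + 3) * poly (bm_Qt m) x
            + 2 * x * (1 + x) * poly (pderiv (bm_Qt m)) x)
         \<and> bm_Qt 0 = 1"
proof (intro conjI allI)
  fix x :: real
  show "poly (bm_Qt (m + 1)) x =
      (2 * real m * x + 4 * real m + 2 * x + 3) * poly (bm_Qt m) x
      + 2 * x * (1 + x) * poly (pderiv (bm_Qt m)) x"
    by (simp add: bm_Qt_rec algebra_simps)
next
  show "bm_Qt 0 = 1"
    by (simp add: bm_Qt_eq_smult_bm_P bm_P_def bm_d_def)
qed

end
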